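(* Let $(X,\rho,\mu)$ be a space of homogeneous type. Then $X$ has infinitely many points if and only if for every $N>0$ there exist balls $B_0$ and $B_1$ in $X$ such that $\mu(B_1)>N\mu(B_0)$.
   Context: A space of homogeneous type $(X,\rho,\mu)$: $\rho$ is a quasi-metric on $X$, i.e. it satisfies the axioms of a metric except that the triangle inequality is replaced by $\rho(x,y)\le A_0(\rho(x,z)+\rho(z,y))$ for some constant $A_0\ge 1$; balls are $B(x,r)=\{y\in X:\rho(x,y)<r\}$; $\mu$ is a positive Borel measure defined on a $\sigma$-algebra containing the balls, with the doubling property: there is $C\ge1$ such that $0<\mu(B(x,2r))\le C\mu(B(x,r))<\infty$ for all $x\in X$, $r>0$. The smallest such $C$ is the doubling constant $C_\mu$. *)

theory Defs
  imports "HOL-Probability.Probability"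
begin

definition quasi_metric :: "'a set \<Rightarrow> ('a \<Rightarrow> 'a \<Rightarrow> real) \<Rightarrow> bool" where
  "quasi_metric X \<rho> \<longleftrightarrow>
     (\<forall>x\<in>X. \<forall>y\<in>X. \<rho> x y \<ge> 0) \<and>
     (\<forall>x\<in>X. \<forall>y\<in>X. \<rho> x y = 0 \<longleftrightarrow> x = y) \<and>
     (\<forall>x\<in>X. \<forall>y\<in>X. \<rho> x y = \<rho> y x) \<and>
     (\<exists>A0\<ge>1. \<forall>x\<in>X. \<forall>y\<in>X. \<forall>z\<in>X. \<rho> x y \<le> A0 * (\<rho> x z + \<rho> z y))"

definition qball :: "'a set \<Rightarrow> ('a \<Rightarrow> 'a \<Rightarrow> real) \<Rightarrow> 'a \<Rightarrow> real \<Rightarrow> 'a set" where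
  "qball X \<rho> x r = {y\<in>X. \<rho> x y < r}"

definition homogeneous_type :: "'a set \<Rightarrow> ('a \<Rightarrow> 'a \<Rightarrow> real) \<Rightarrow> 'a measure \<Rightarrow> bool" where
  "homogeneous_type X \<rho> \<mu> \<longleftrightarrow>
     quasi_metric X \<rho> \<and> space \<mu> = X \<and>
     (\<forall>x\<in>X. \<forall>r>0. qball X \<rho> x r \<in> sets \<mu>) \<and>
     (\<exists>C\<ge>1. \<forall>x\<in>X. \<forall>r>0.
        0 < emeasure \<mu> (qball X \<rho> x (2 * r)) \<and>
        emeasure \<mu> (qball X \<rho> x (2 * r)) \<le> ennreal C * emeasure \<mu> (qball X \<rho> x r) \<and>
        emeasure \<mu> (qball X \<rho> x r) < \<infinity>)"

end

theory Submission
  imports Defs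
begin

text \<open>
  Finite case: there are only finitely many balls, all of positive finite
  measure, so the ratio is bounded by (largest ball measure) / (smallest one).

  Infinite case: pick M points. A finite set of distinct points is uniformly
  separated, so for a small radius r the balls of radius r around them are
  pairwise disjoint, and all of them lie in one large ball B1. By additivity,
  mu(B1) is at least M times the smallest of the small balls B0.
\<close>

lemma quasi_metric_triangle:
  assumes "quasi_metric X \<rho>"
  obtains A0 where "A0 \<ge> 1"
    and "\<And>x y z. x \<in> X \<Longrightarrow> y \<in> X \<Longrightarrow> z \<in> X \<Longrightarrow> \<rho> x y \<le> A0 * (\<rho> x z + \<rho> z y)"
proof -
  have "\<exists>A0\<ge>1. \<forall>x\<in>X. \<forall>y\<in>X. \<forall>z\<in>X. \<rho> x y \<le> A0 * (\<rho> x z + \<rho> z y)"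
    using assms unfolding quasi_metric_def by (elim conjE)
  then obtain A0 where "A0 \<ge> 1"
    and "\<forall>x\<in>X. \<forall>y\<in>X. \<forall>z\<in>X. \<rho> x y \<le> A0 * (\<rho> x z + \<rho> z y)"
    by blast
  then show thesis
    using that by simp
qed

lemma quasi_metric_sym:
  assumes "quasi_metric X \<rho>" "x \<in> X" "y \<in> X"
  shows "\<rho> x y = \<rho> y x"
  using assms unfolding quasi_metric_def by blast

lemma quasi_metric_pos:
  assumes "quasi_metric X \<rho>" "x \<in> X" "y \<in> X" "x \<noteq> y"
  shows "\<rho> x y > 0"
proof -
  have "\<rho> x y \<ge> 0" "\<rho> x y \<noteq> 0"
    using assms unfolding quasi_metric_def by blast+
  then show ?thesis by simp
qed

text \<open>Every ball in a space of homogeneous type is measurable, of finite and of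
  strictly positive measure (positivity comes from the doubling axiom at radius r/2).\<close>
lemma homogeneous_ball:
  assumes "homogeneous_type X \<rho> \<mu>" "x \<in> X" "r > 0"
  shows "qball X \<rho> x r \<in> fmeasurable \<mu>"
    and "measure \<mu> (qball X \<rho> x r) > 0"
proof -
  have doubling: "\<forall>x\<in>X. \<forall>r>0. 0 < emeasure \<mu> (qball X \<rho> x (2 * r))
                                \<and> emeasure \<mu> (qball X \<rho> x r) < \<infinity>"
    using assms(1) unfolding homogeneous_type_def by blast
  have meas: "qball X \<rho> x r \<in> sets \<mu>"
    using assms unfolding homogeneous_type_def by blast
  have fin: "emeasure \<mu> (qball X \<rho> x r) < \<infinity>"
    using doubling assms by blast
  have "0 < emeasure \<mu> (qball X \<rho> x (2 * (r / 2)))"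
    using doubling assms(2) half_gt_zero[OF assms(3)] by blast
  then have pos: "0 < emeasure \<mu> (qball X \<rho> x r)"
    by simp
  show "qball X \<rho> x r \<in> fmeasurable \<mu>"
    using meas fin by (rule fmeasurableI)
  show "measure \<mu> (qball X \<rho> x r) > 0"
    using fin pos unfolding measure_def by (simp add: enn2real_positive_iff)
qed

lemma quasi_metric_finite_separated:
  assumes qm: "quasi_metric X \<rho>" and S: "finite S" "S \<subseteq> X"
  obtains \<delta> where "\<delta> > 0" and "\<And>s t. s \<in> S \<Longrightarrow> t \<in> S \<Longrightarrow> s \<noteq> t \<Longrightarrow> \<delta> \<le> \<rho> s t"
proof -
  text \<open>The extra value 1 covers the case of fewer than two points.\<close>
  define P where "P = {(s, t) \<in> S \<times> S. s \<noteq> t}"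
  define \<delta> where "\<delta> = Min (insert 1 ((\<lambda>(s, t). \<rho> s t) ` P))"
  have "finite P"
    using finite_subset[of P "S \<times> S"] S(1) unfolding P_def by auto
  have distinct_pos: "\<rho> s t > 0" if "(s, t) \<in> P" for s t
  proof -
    have "s \<in> X" "t \<in> X" "s \<noteq> t" using that S(2) unfolding P_def by auto
    then show ?thesis by (rule quasi_metric_pos[OF qm])
  qed
  have "\<delta> > 0"
    unfolding \<delta>_def using \<open>finite P\<close> distinct_pos by (subst Min_gr_iff) auto
  moreover have "\<delta> \<le> \<rho> s t" if "s \<in> S" "t \<in> S" "s \<noteq> t" for s t
  proof -
    have "(s, t) \<in> P" unfolding P_def using that by simp
    then show ?thesis
      unfolding \<delta>_def using \<open>finite P\<close> by (intro Min_le) force+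
  qed
  ultimately show thesis by (rule that)
qed

text \<open>Consequently, for a small enough radius the balls around finitely many points
  are pairwise disjoint: a common point would bring two of them closer than \<delta>.\<close>
lemma quasi_metric_disjoint_balls:
  assumes qm: "quasi_metric X \<rho>" and S: "finite S" "S \<subseteq> X"
  obtains r where "r > 0" and "disjoint_family_on (\<lambda>s. qball X \<rho> s r) S"
proof -
  obtain A0 where A0: "A0 \<ge> 1"
    and tri: "\<And>x y z. x \<in> X \<Longrightarrow> y \<in> X \<Longrightarrow> z \<in> X \<Longrightarrow> \<rho> x y \<le> A0 * (\<rho> x z + \<rho> z y)"
    using quasi_metric_triangle[OF qm] by metis
  obtain \<delta> where "\<delta> > 0"
    and separation: "\<And>s t. s \<in> S \<Longrightarrow> t \<in> S \<Longrightarrow> s \<noteq> t \<Longrightarrow> \<delta> \<le> \<rho> s t"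
    using quasi_metric_finite_separated[OF qm S] by metis
  define r where "r = \<delta> / (2 * A0)"
  have "r > 0"
    unfolding r_def using \<open>\<delta> > 0\<close> A0 by simp
  moreover have "disjoint_family_on (\<lambda>s. qball X \<rho> s r) S"
    unfolding disjoint_family_on_def
  proof (intro ballI impI)
    fix s t assume st: "s \<in> S" "t \<in> S" "s \<noteq> t"
    show "qball X \<rho> s r \<inter> qball X \<rho> t r = {}"
    proof (rule ccontr)
      assume "qball X \<rho> s r \<inter> qball X \<rho> t r \<noteq> {}"
      then obtain y where y: "y \<in> X" "\<rho> s y < r" "\<rho> t y < r"
        unfolding qball_def by blast
      have "s \<in> X" "t \<in> X" using st S(2) by auto
      have "\<rho> s t \<le> A0 * (\<rho> s y + \<rho> t y)"
        using tri[of s t y] quasi_metric_sym[OF qm y(1) \<open>t \<in> X\<close>] \<open>s \<in> X\<close> \<open>t \<in> X\<close> y(1) by simp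
      also have "\<dots> < A0 * (2 * r)"
        using y A0 by (intro mult_strict_left_mono) auto
      also have "\<dots> = \<delta>"
        unfolding r_def using A0 by simp
      finally show False
        using separation[OF st] by simp
    qed
  qed
  ultimately show thesis by (rule that)
qed

lemma quasi_metric_balls_in_ball:
  assumes qm: "quasi_metric X \<rho>" and S: "finite S" "S \<subseteq> X" and x: "x \<in> X"
  obtains R where "R > 0" and "(\<Union>s\<in>S. qball X \<rho> s r) \<subseteq> qball X \<rho> x R"
proof -
  obtain A0 where A0: "A0 \<ge> 1"
    and tri: "\<And>x y z. x \<in> X \<Longrightarrow> y \<in> X \<Longrightarrow> z \<in> X \<Longrightarrow> \<rho> x y \<le> A0 * (\<rho> x z + \<rho> z y)"
    using quasi_metric_triangle[OF qm] by metis
  define D where "D = Max (insert 0 (\<rho> x ` S))"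
  have far: "\<rho> x s \<le> D" if "s \<in> S" for s
    unfolding D_def using S(1) that by (intro Max_ge) auto
  have "D \<ge> 0"
    unfolding D_def using S(1) by (intro Max_ge) auto
  define R where "R = A0 * (D + \<bar>r\<bar>) + 1"
  have "A0 * (D + \<bar>r\<bar>) \<ge> 0"
    using A0 \<open>D \<ge> 0\<close> by simp
  then have "R > 0"
    unfolding R_def by linarith
  moreover have "(\<Union>s\<in>S. qball X \<rho> s r) \<subseteq> qball X \<rho> x R"
  proof
    fix y assume "y \<in> (\<Union>s\<in>S. qball X \<rho> s r)"
    then obtain s where s: "s \<in> S" "y \<in> X" "\<rho> s y < r"
      unfolding qball_def by blast
    have "s \<in> X"
      using s(1) S(2) by blast
    have "\<rho> x y \<le> A0 * (\<rho> x s + \<rho> s y)"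
      using tri[OF x s(2) \<open>s \<in> X\<close>] .
    also have "\<dots> \<le> A0 * (D + \<bar>r\<bar>)"
      using far[OF s(1)] s(3) A0 by (intro mult_left_mono) auto
    also have "\<dots> < R"
      unfolding R_def by simp
    finally show "y \<in> qball X \<rho> x R"
      unfolding qball_def using s(2) by simp
  qed
  ultimately show thesis by (rule that)
qed

text \<open>Any n points yield a ball whose measure is at least n times that of another
  ball: n disjoint small balls fit into one large ball, and the smallest of them
  has at most the average measure.\<close>
lemma homogeneous_many_points_ball_ratio:
  assumes ht: "homogeneous_type X \<rho> \<mu>" and S: "finite S" "S \<subseteq> X" "S \<noteq> {}"
  shows "\<exists>x0\<in>X. \<exists>r0>0. \<exists>x1\<in>X. \<exists>r1>0.
           real (card S) * measure \<mu> (qball X \<rho> x0 r0) \<le> measure \<mu> (qball X \<rho> x1 r1)"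
proof -
  have qm: "quasi_metric X \<rho>"
    using ht unfolding homogeneous_type_def by blast
  obtain r where r: "r > 0" and disj: "disjoint_family_on (\<lambda>s. qball X \<rho> s r) S"
    using quasi_metric_disjoint_balls[OF qm S(1,2)] .
  obtain x1 where x1: "x1 \<in> S"
    using S(3) by blast
  then have "x1 \<in> X" using S(2) by blast
  obtain R where R: "R > 0" and cover: "(\<Union>s\<in>S. qball X \<rho> s r) \<subseteq> qball X \<rho> x1 R"
    using quasi_metric_balls_in_ball[OF qm S(1,2) \<open>x1 \<in> X\<close>] .
  let ?m = "\<lambda>s. measure \<mu> (qball X \<rho> s r)"
  define x0 where "x0 = arg_min_on ?m S"
  have "x0 \<in> S"
    unfolding x0_def using S(1,3) by (rule arg_min_if_finite)
  have smallest: "?m x0 \<le> ?m s" if "s \<in> S" for s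
    unfolding x0_def using S(1,3) that by (rule arg_min_least)
  have balls: "qball X \<rho> s r \<in> fmeasurable \<mu>" if "s \<in> S" for s
    using homogeneous_ball(1)[OF ht _ r] that S(2) by blast
  have "real (card S) * ?m x0 = (\<Sum>s\<in>S. ?m x0)"
    by simp
  also have "\<dots> \<le> (\<Sum>s\<in>S. ?m s)"
    using smallest by (rule sum_mono)
  also have "\<dots> = measure \<mu> (\<Union>s\<in>S. qball X \<rho> s r)"
    using S(1) disj balls by (intro measure_finite_Union[symmetric]) (auto dest: fmeasurableD2)
  also have "\<dots> \<le> measure \<mu> (qball X \<rho> x1 R)"
    using cover S(1) balls homogeneous_ball(1)[OF ht \<open>x1 \<in> X\<close> R]
    by (intro measure_mono_fmeasurable) (auto intro!: sets.finite_UN)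
  finally show ?thesis
    using \<open>x0 \<in> S\<close> S(2) r \<open>x1 \<in> X\<close> R by blast
qed

text \<open>On a finite space there are only finitely many balls, so the ratio of two
  ball measures is bounded by the largest over the smallest ball measure.\<close>
lemma homogeneous_finite_ball_ratio_bounded:
  assumes ht: "homogeneous_type X \<rho> \<mu>" and fin: "finite X"
  obtains K where "K > 0"
    and "\<And>x0 r0 x1 r1. x0 \<in> X \<Longrightarrow> r0 > 0 \<Longrightarrow> x1 \<in> X \<Longrightarrow> r1 > 0 \<Longrightarrow>
           measure \<mu> (qball X \<rho> x1 r1) \<le> K * measure \<mu> (qball X \<rho> x0 r0)"
proof -
  define Balls where "Balls = {qball X \<rho> x r | x r. x \<in> X \<and> r > 0}"
  text \<open>The value 1 is added so that Max and Min are taken over a nonempty set.\<close>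
  define Ms where "Ms = insert 1 (measure \<mu> ` Balls)"
  have "Balls \<subseteq> Pow X"
    unfolding Balls_def qball_def by blast
  then have "finite Ms"
    unfolding Ms_def using fin by (meson finite_Pow_iff finite_imageI finite_insert finite_subset)
  have ball_in: "measure \<mu> (qball X \<rho> x r) \<in> Ms" if "x \<in> X" "r > 0" for x r
    unfolding Ms_def Balls_def using that by blast
  have "\<forall>m\<in>Ms. m > 0"
    unfolding Ms_def Balls_def using homogeneous_ball(2)[OF ht] by auto
  then have "Min Ms > 0" "Max Ms > 0"
    using \<open>finite Ms\<close> by (simp_all add: Ms_def Max_gr_iff)
  define K where "K = Max Ms / Min Ms"
  have "K > 0"
    unfolding K_def using \<open>Min Ms > 0\<close> \<open>Max Ms > 0\<close> by simp
  moreover have "measure \<mu> (qball X \<rho> x1 r1) \<le> K * measure \<mu> (qball X \<rho> x0 r0)"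
    if "x0 \<in> X" "r0 > 0" "x1 \<in> X" "r1 > 0" for x0 r0 x1 r1
  proof -
    have "measure \<mu> (qball X \<rho> x1 r1) \<le> Max Ms"
      using \<open>finite Ms\<close> ball_in that by simp
    also have "\<dots> = K * Min Ms"
      unfolding K_def using \<open>Min Ms > 0\<close> by simp
    also have "\<dots> \<le> K * measure \<mu> (qball X \<rho> x0 r0)"
      using \<open>finite Ms\<close> ball_in that \<open>K > 0\<close> by (intro mult_left_mono) auto
    finally show ?thesis .
  qed
  ultimately show thesis by (rule that)
qed

lemma homogeneous_infinite_ball_ratio_unbounded:
  assumes ht: "homogeneous_type X \<rho> \<mu>" and "infinite X" and "N > 0"
  shows "\<exists>x0\<in>X. \<exists>r0>0. \<exists>x1\<in>X. \<exists>r1>0.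
           measure \<mu> (qball X \<rho> x1 r1) > N * measure \<mu> (qball X \<rho> x0 r0)"
proof -
  obtain S where S: "finite S" "card S = nat \<lceil>N\<rceil> + 1" "S \<subseteq> X"
    using infinite_arbitrarily_large[OF \<open>infinite X\<close>] by blast
  then have "S \<noteq> {}" and "N < real (card S)"
    by (auto, linarith)
  then obtain x0 r0 x1 r1 where balls: "x0 \<in> X" "r0 > 0" "x1 \<in> X" "r1 > 0"
    and ratio: "real (card S) * measure \<mu> (qball X \<rho> x0 r0) \<le> measure \<mu> (qball X \<rho> x1 r1)"
    using homogeneous_many_points_ball_ratio[OF ht S(1,3)] by blast
  have "N * measure \<mu> (qball X \<rho> x0 r0) < real (card S) * measure \<mu> (qball X \<rho> x0 r0)"
    using \<open>N < real (card S)\<close> homogeneous_ball(2)[OF ht balls(1,2)] by simp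
  then show ?thesis
    using balls ratio by force
qed

theorem lemma2p3:
  fixes X :: "'a set" and \<rho> :: "'a \<Rightarrow> 'a \<Rightarrow> real" and \<mu> :: "'a measure"
  assumes "homogeneous_type X \<rho> \<mu>"
  shows "infinite X \<longleftrightarrow>
    (\<forall>N>0. \<exists>x0\<in>X. \<exists>r0>0. \<exists>x1\<in>X. \<exists>r1>0.
        measure \<mu> (qball X \<rho> x1 r1) > N * measure \<mu> (qball X \<rho> x0 r0))"
    (is "_ \<longleftrightarrow> ?unbounded")
proof
  assume "infinite X"
  then show ?unbounded
    using homogeneous_infinite_ball_ratio_unbounded[OF assms] by blast
next
  assume ?unbounded
  show "infinite X"
  proof
    assume "finite X"
    then obtain K where "K > 0" and bounded:
      "\<And>x0 r0 x1 r1. x0 \<in> X \<Longrightarrow> r0 > 0 \<Longrightarrow> x1 \<in> X \<Longrightarrow> r1 > 0 \<Longrightarrow>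
         measure \<mu> (qball X \<rho> x1 r1) \<le> K * measure \<mu> (qball X \<rho> x0 r0)"
      using homogeneous_finite_ball_ratio_bounded[OF assms] by blast
    show False
      using \<open>?unbounded\<close> \<open>K > 0\<close> bounded by (meson not_le)
  qed
qed

end
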